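(* In the discrete setting described in the context, let $x_1,\dots,x_k\in\mathrm{dom}\,\partial l$ be arbitrary, and for each $i\ge1$ let $u_i\in\partial f(x_i)=\nabla g(x_i)+\partial l(x_i)$ and $$E_i:=A_i\Bigl\langle u_i,\;x_i-\frac{a_i}{A_i}z_i-\frac{A_{i-1}}{A_i}x_{i-1}\Bigr\rangle-\frac{\gamma}{q}\|z_i-z_{i-1}\|^q.$$ Then for all $k\ge1$, $$A_kf(x_k)-\psi_k(z_k)\le\sum_{i=1}^kE_i.$$
   Context: $\|\cdot\|$ is a norm on $\mathbb{R}^d$. A function $\varphi:\mathbb{R}^d\to\mathbb{R}\cup\{+\infty\}$ is $(s,\sigma)$-uniformly convex w.r.t. $\|\cdot\|$ ($s\ge2$, $\sigma>0$) if $\varphi(y)\ge\varphi(x)+\langle\zeta,y-x\rangle+\frac{\sigma}{s}\|y-x\|^s$ for all $y$, all $x$ with $\partial\varphi(x)\ne\emptyset$ and all $\zeta\in\partial\varphi(x)$. $f=g+l$ with $g:\mathbb{R}^d\to\mathbb{R}$ convex and differentiable and $l:\mathbb{R}^d\to\mathbb{R}\cup\{+\infty\}$ proper, closed, convex. $\hat f(x;y):=g(y)+\langle\nabla g(y),x-y\rangle+l(x)$. Fix $q\ge2$, $\gamma>0$, $x_0\in\mathrm{dom}\,l$, and $h(\cdot;x_0):\mathbb{R}^d\to\mathbb{R}$ convex with $h(x;x_0)\ge0$, $h(x;x_0)=0$ iff $x=x_0$, and $h(\cdot;x_0)$ $(q,\gamma)$-uniformly convex w.r.t. $\|\cdot\|$.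 Let $a_1,a_2,\dots>0$, $A_0:=0$, $A_i:=A_{i-1}+a_i$. Set $\psi_0:=h(\cdot;x_0)$, $\psi_k(x):=\sum_{i=1}^ka_i\hat f(x;x_i)+h(x;x_0)$, $z_0:=x_0$, and for $k\ge1$ let $z_k$ be the unique minimizer of $\psi_k$. *)

theory Defs
  imports "HOL-Analysis.Analysis"
begin

definition is_norm :: "('a::euclidean_space \<Rightarrow> real) \<Rightarrow> bool" where
  "is_norm N \<longleftrightarrow> (\<forall>x. 0 \<le> N x) \<and> (\<forall>x. N x = 0 \<longleftrightarrow> x = 0)
     \<and> (\<forall>c x. N (c *\<^sub>R x) = \<bar>c\<bar> * N x) \<and> (\<forall>x y. N (x + y) \<le> N x + N y)"

definition proper_fun :: "('a \<Rightarrow> ereal) \<Rightarrow> bool" where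
  "proper_fun \<phi> \<longleftrightarrow> (\<forall>x. \<phi> x \<noteq> -\<infinity>) \<and> (\<exists>x. \<phi> x \<noteq> \<infinity>)"

definition convex_ext :: "('a::real_vector \<Rightarrow> ereal) \<Rightarrow> bool" where
  "convex_ext \<phi> \<longleftrightarrow> (\<forall>x y t. 0 \<le> t \<and> t \<le> 1 \<longrightarrow>
     \<phi> ((1 - t) *\<^sub>R x + t *\<^sub>R y) \<le> ereal (1 - t) * \<phi> x + ereal t * \<phi> y)"

definition closed_fun :: "('a::topological_space \<Rightarrow> ereal) \<Rightarrow> bool" where
  "closed_fun \<phi> \<longleftrightarrow> closed {(x, t::real). \<phi> x \<le> ereal t}"

definition edom :: "('a \<Rightarrow> ereal) \<Rightarrow> 'a set" where
  "edom \<phi> = {x. \<phi> x < \<infinity>}"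

definition subdiff :: "('a::real_inner \<Rightarrow> ereal) \<Rightarrow> 'a \<Rightarrow> 'a set" where
  "subdiff \<phi> x = {\<zeta>. \<bar>\<phi> x\<bar> \<noteq> \<infinity> \<and> (\<forall>y. \<phi> x + ereal (\<zeta> \<bullet> (y - x)) \<le> \<phi> y)}"

definition unif_convex :: "real \<Rightarrow> real \<Rightarrow> ('a::real_inner \<Rightarrow> real) \<Rightarrow> ('a \<Rightarrow> ereal) \<Rightarrow> bool" where
  "unif_convex s \<sigma> N \<phi> \<longleftrightarrow> (\<forall>x y \<zeta>. \<zeta> \<in> subdiff \<phi> x \<longrightarrow>
     \<phi> x + ereal (\<zeta> \<bullet> (y - x)) + ereal (\<sigma> / s * N (y - x) powr s) \<le> \<phi> y)"

definition fhat :: "('a::real_inner \<Rightarrow> real) \<Rightarrow> ('a \<Rightarrow> 'a) \<Rightarrow> ('a \<Rightarrow> ereal) \<Rightarrow> 'a \<Rightarrow> 'a \<Rightarrow> ereal" where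
  "fhat g G l x y = ereal (g y + G y \<bullet> (x - y)) + l x"

definition psi :: "(nat \<Rightarrow> real) \<Rightarrow> ('a::real_inner \<Rightarrow> real) \<Rightarrow> ('a \<Rightarrow> 'a) \<Rightarrow> ('a \<Rightarrow> ereal)
    \<Rightarrow> ('a \<Rightarrow> real) \<Rightarrow> (nat \<Rightarrow> 'a) \<Rightarrow> nat \<Rightarrow> 'a \<Rightarrow> ereal" where
  "psi a g G l h x k v = (\<Sum>i=1..k. ereal (a i) * fhat g G l v (x i)) + ereal (h v)"

end

theory Submission
  imports Defs
begin

text \<open>
  Write \<open>\<psi>\<^sub>j = \<Phi>\<^sub>j + h\<close>, where \<open>\<Phi>\<^sub>j\<close> is the weighted sum of the linearization models, and
  consider the gap \<open>D\<^sub>j = A\<^sub>j f(x\<^sub>j) - \<psi>\<^sub>j(z\<^sub>j)\<close>, which vanishes for \<open>j = 0\<close>.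
  As \<open>\<Phi>\<^sub>j\<close> is convex and \<open>h\<close> is \<open>(q,\<gamma>)\<close>-uniformly convex, the minimizer \<open>z\<^sub>j\<close> of \<open>\<psi>\<^sub>j\<close>
  satisfies \<open>\<psi>\<^sub>j(z\<^sub>j) + \<gamma>/q \<parallel>v - z\<^sub>j\<parallel>\<^sup>q \<le> \<psi>\<^sub>j(v)\<close>; this is obtained by comparing \<open>z\<^sub>j\<close> with
  the points of the segment towards \<open>v\<close> and letting them tend to \<open>z\<^sub>j\<close>, which avoids a sum
  rule for subdifferentials. Since \<open>u\<^sub>m \<in> \<partial>f(x\<^sub>m)\<close>, both \<open>f(x\<^sub>j)\<close> and the linearization
  of \<open>f\<close> at \<open>x\<^sub>m\<close> are bounded below by \<open>f(x\<^sub>m) + \<langle>u\<^sub>m, \<cdot> - x\<^sub>m\<rangle>\<close>, where \<open>m = j + 1\<close>.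
  With \<open>v = z\<^sub>m\<close> these bounds give \<open>D\<^sub>m - D\<^sub>j \<le> E\<^sub>m\<close>, and the theorem follows by telescoping.
\<close>

lemma convex_on_gradient_inequality:
  fixes g :: "'a::real_inner \<Rightarrow> real"
  assumes convex: "convex_on UNIV g" and grad: "(g has_derivative (\<lambda>v. G \<bullet> v)) (at x)"
  shows "g x + G \<bullet> (y - x) \<le> g y"
proof -
  define \<phi> where "\<phi> t = g (x + t *\<^sub>R (y - x))" for t :: real
  have "convex_on UNIV \<phi>"
  proof (rule convex_onI)
    fix s t u :: real assume "0 < u" "u < 1"
    have "x + ((1 - u) * s + u * t) *\<^sub>R (y - x)
        = (1 - u) *\<^sub>R (x + s *\<^sub>R (y - x)) + u *\<^sub>R (x + t *\<^sub>R (y - x))"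
      by (simp add: algebra_simps)
    then show "\<phi> ((1 - u) *\<^sub>R s + u *\<^sub>R t) \<le> (1 - u) * \<phi> s + u * \<phi> t"
      unfolding \<phi>_def using convex_onD[OF convex, of u] \<open>0 < u\<close> \<open>u < 1\<close> by simp
  qed auto
  moreover have "(\<phi> has_field_derivative (G \<bullet> (y - x))) (at 0 within UNIV)"
  proof -
    have "((\<lambda>t. x + t *\<^sub>R (y - x)) has_derivative (\<lambda>t. t *\<^sub>R (y - x))) (at 0)"
      by (auto intro!: derivative_eq_intros)
    moreover have "(g has_derivative (\<lambda>v. G \<bullet> v)) (at (x + 0 *\<^sub>R (y - x)))"
      using grad by simp
    ultimately have "(\<phi> has_derivative (\<lambda>t. G \<bullet> (t *\<^sub>R (y - x)))) (at 0)"
      unfolding \<phi>_def by (rule has_derivative_compose)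
    moreover have "(\<lambda>t. t * (G \<bullet> (y - x))) = (*) (G \<bullet> (y - x))"
      by (auto simp: mult.commute)
    ultimately show ?thesis
      unfolding has_field_derivative_def by simp
  qed
  ultimately have "\<phi> 1 - \<phi> 0 \<ge> (G \<bullet> (y - x)) * (1 - 0)"
    by (intro convex_on_imp_above_tangent) auto
  then show ?thesis unfolding \<phi>_def by simp
qed

lemma convex_on_subgradient_exists:
  fixes h :: "'a::euclidean_space \<Rightarrow> real"
  assumes convex: "convex_on UNIV h"
  shows "\<exists>\<zeta>. \<forall>v. h w + \<zeta> \<bullet> (v - w) \<le> h v"
proof -
  define T where "T = {p :: 'a \<times> real. h (fst p) < snd p}"
  have "convex T" unfolding T_def convex_def
  proof clarsimp
    fix a b :: 'a and s t u v :: real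
    assume *: "h a < s" "h b < t" "0 \<le> u" "0 \<le> v" "u + v = 1"
    have "h (u *\<^sub>R a + v *\<^sub>R b) \<le> u * h a + v * h b"
      using convex * unfolding convex_on_def by auto
    moreover have "u * h a + v * h b < u * s + v * t"
    proof (cases "u = 0")
      case False
      then have "u * h a < u * s" using * by (intro mult_strict_left_mono) auto
      moreover have "v * h b \<le> v * t" using * by (intro mult_left_mono) auto
      ultimately show ?thesis by linarith
    qed (use * in auto)
    ultimately show "h (u *\<^sub>R a + v *\<^sub>R b) < u * s + v * t" by linarith
  qed
  moreover have "T \<noteq> {}" unfolding T_def by (metis fst_conv snd_conv less_add_one mem_Collect_eq empty_iff)
  moreover have "{(w, h w)} \<inter> T = {}" unfolding T_def by auto
  ultimately obtain p b where "p \<noteq> 0" and below: "p \<bullet> (w, h w) \<le> b" and above: "\<forall>y\<in>T. b \<le> p \<bullet> y"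
    using separating_hyperplane_sets[OF convex_singleton, of T "(w, h w)"] by auto
  obtain \<alpha> c where p: "p = (\<alpha>, c)" by (cases p)
  have epi: "\<alpha> \<bullet> w + c * h w \<le> \<alpha> \<bullet> v + c * s" if "h v < s" for v s
    using below above[rule_format, of "(v, s)"] that unfolding p T_def by (simp add: inner_Pair)
  have "c \<ge> 0" using epi[of w "h w + 1"] by (simp add: algebra_simps)
  moreover have "c \<noteq> 0"
  proof
    assume "c = 0"
    then have "\<alpha> \<noteq> 0" using \<open>p \<noteq> 0\<close> p by (auto simp: zero_prod_def)
    have "\<alpha> \<bullet> w \<le> \<alpha> \<bullet> (w - \<alpha>)" using epi[of "w - \<alpha>" "h (w - \<alpha>) + 1"] \<open>c = 0\<close> by simp
    then have "\<alpha> \<bullet> \<alpha> \<le> 0" by (simp add: inner_diff_right)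
    with \<open>\<alpha> \<noteq> 0\<close> show False using inner_gt_zero_iff[of \<alpha>] by linarith
  qed
  ultimately have c: "c > 0" by simp
  have "h w + (- (1 / c) *\<^sub>R \<alpha>) \<bullet> (v - w) \<le> h v" for v
  proof -
    have "\<alpha> \<bullet> w + c * h w \<le> \<alpha> \<bullet> v + c * h v"
    proof (rule field_le_epsilon)
      fix e :: real assume "e > 0"
      then have "\<alpha> \<bullet> w + c * h w \<le> \<alpha> \<bullet> v + c * (h v + e / c)" using epi[of v "h v + e / c"] c by simp
      then show "\<alpha> \<bullet> w + c * h w \<le> \<alpha> \<bullet> v + c * h v + e" using c by (simp add: algebra_simps)
    qed
    then have "c * (h w - (1 / c) * (\<alpha> \<bullet> (v - w))) \<le> c * h v"
      using c by (simp add: algebra_simps inner_diff_right)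
    then show ?thesis using c by simp
  qed
  then show ?thesis by blast
qed

lemma unif_convex_on_segment:
  fixes N h :: "'a::euclidean_space \<Rightarrow> real"
  assumes N: "is_norm N" and q: "0 < q" and \<gamma>: "0 \<le> \<gamma>"
    and convex: "convex_on UNIV h" and uc: "unif_convex q \<gamma> N (\<lambda>v. ereal (h v))"
    and t: "0 < t" "t < 1"
  shows "h (z + t *\<^sub>R (y - z)) + t * (\<gamma> / q * ((1 - t) powr q * N (y - z) powr q))
    \<le> (1 - t) * h z + t * h y"
proof -
  define w where "w = z + t *\<^sub>R (y - z)"
  define M where "M = N (y - z) powr q"
  have N_scale: "N (c *\<^sub>R v) = \<bar>c\<bar> * N v" and N_nonneg: "N v \<ge> 0" for c v
    using N unfolding is_norm_def by blast+
  obtain \<zeta> where "\<And>v. h w + \<zeta> \<bullet> (v - w) \<le> h v"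
    using convex_on_subgradient_exists[OF convex] by blast
  then have "\<zeta> \<in> subdiff (\<lambda>v. ereal (h v)) w" unfolding subdiff_def by simp
  then have uc_w: "h w + \<zeta> \<bullet> (v - w) + \<gamma> / q * N (v - w) powr q \<le> h v" for v
    using uc unfolding unif_convex_def by (metis plus_ereal.simps(1) ereal_less_eq(3))
  have zw: "z - w = (- t) *\<^sub>R (y - z)" and yw: "y - w = (1 - t) *\<^sub>R (y - z)"
    unfolding w_def by (simp_all add: algebra_simps)
  have "h w + \<zeta> \<bullet> (z - w) + \<gamma> / q * (t powr q * M) \<le> h z"
    using uc_w[of z] t N_nonneg unfolding zw N_scale M_def by (simp add: powr_mult)
  moreover have "0 \<le> \<gamma> / q * (t powr q * M)"
    using q \<gamma> unfolding M_def by simp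
  ultimately have "h w + \<zeta> \<bullet> (z - w) \<le> h z" by linarith
  then have "(1 - t) * (h w + \<zeta> \<bullet> (z - w)) \<le> (1 - t) * h z"
    using t by (intro mult_left_mono) auto
  moreover have "h w + \<zeta> \<bullet> (y - w) + \<gamma> / q * ((1 - t) powr q * M) \<le> h y"
    using uc_w[of y] t N_nonneg unfolding yw N_scale M_def by (simp add: powr_mult)
  then have "t * (h w + \<zeta> \<bullet> (y - w) + \<gamma> / q * ((1 - t) powr q * M)) \<le> t * h y"
    using t by (intro mult_left_mono) auto
  moreover have "(1 - t) * (\<zeta> \<bullet> (z - w)) + t * (\<zeta> \<bullet> (y - w)) = 0"
    unfolding zw yw by (simp add: algebra_simps)
  ultimately show ?thesis
    unfolding w_def [symmetric] M_def [symmetric] by (simp add: algebra_simps)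
qed

lemma minimizer_growth_on_segment:
  fixes N \<Phi> h :: "'a::euclidean_space \<Rightarrow> real"
  assumes N: "is_norm N" and q: "0 < q" and \<gamma>: "0 \<le> \<gamma>"
    and convex: "convex_on UNIV h" and uc: "unif_convex q \<gamma> N (\<lambda>v. ereal (h v))"
    and minimal: "\<And>t. 0 < t \<Longrightarrow> t < 1 \<Longrightarrow>
      \<Phi> z + h z \<le> \<Phi> (z + t *\<^sub>R (y - z)) + h (z + t *\<^sub>R (y - z))"
    and \<Phi>_convex: "\<And>t. 0 < t \<Longrightarrow> t < 1 \<Longrightarrow> \<Phi> (z + t *\<^sub>R (y - z)) \<le> (1 - t) * \<Phi> z + t * \<Phi> y"
  shows "\<Phi> z + h z + \<gamma> / q * N (y - z) powr q \<le> \<Phi> y + h y"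
proof -
  define M where "M = N (y - z) powr q"
  have near: "\<Phi> z + h z + \<gamma> / q * ((1 - t) powr q * M) \<le> \<Phi> y + h y" if t: "0 < t" "t < 1" for t
  proof -
    have "t * (\<Phi> z + h z + \<gamma> / q * ((1 - t) powr q * M)) \<le> t * (\<Phi> y + h y)"
      using minimal[OF t] \<Phi>_convex[OF t] unif_convex_on_segment[OF N q \<gamma> convex uc t, of z y]
      unfolding M_def by (simp add: algebra_simps)
    then show ?thesis using t by simp
  qed
  have "eventually (\<lambda>t. \<Phi> z + h z + \<gamma> / q * ((1 - t) powr q * M) \<le> \<Phi> y + h y) (at_right 0)"
    using eventually_at_right_real[of 0 1] by (rule eventually_mono) (use near in auto)
  moreover have "((\<lambda>t. \<Phi> z + h z + \<gamma> / q * ((1 - t) powr q * M))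
      \<longlongrightarrow> \<Phi> z + h z + \<gamma> / q * ((1 - 0) powr q * M)) (at_right 0)"
    by (intro tendsto_intros) auto
  ultimately have "\<Phi> z + h z + \<gamma> / q * ((1 - 0) powr q * M) \<le> \<Phi> y + h y"
    by (intro tendsto_le[OF _ tendsto_const]) auto
  then show ?thesis unfolding M_def by simp
qed

locale estimate_sequence =
  fixes N :: "'a::euclidean_space \<Rightarrow> real"
    and g :: "'a \<Rightarrow> real" and G :: "'a \<Rightarrow> 'a" and l :: "'a \<Rightarrow> ereal"
    and h :: "'a \<Rightarrow> real" and q \<gamma> :: real
    and a :: "nat \<Rightarrow> real" and A :: "nat \<Rightarrow> real"
    and x z u :: "nat \<Rightarrow> 'a" and k :: nat
  assumes norm: "is_norm N"
    and g_convex: "convex_on UNIV g"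
    and g_grad: "\<And>y. (g has_derivative (\<lambda>v. G y \<bullet> v)) (at y)"
    and l_proper: "proper_fun l" and l_convex: "convex_ext l"
    and q_pos: "0 < q" and \<gamma>_nonneg: "0 \<le> \<gamma>"
    and x0: "x 0 \<in> edom l"
    and h_convex: "convex_on UNIV h"
    and h_nonneg: "\<And>v. h v \<ge> 0"
    and h_zero: "\<And>v. h v = 0 \<longleftrightarrow> v = x 0"
    and h_uc: "unif_convex q \<gamma> N (\<lambda>v. ereal (h v))"
    and a_pos: "\<And>i. i \<ge> 1 \<Longrightarrow> a i > 0"
    and A_def: "\<And>j. A j = (\<Sum>i=1..j. a i)"
    and z0: "z 0 = x 0"
    and z_min: "\<And>j v. 1 \<le> j \<Longrightarrow> j \<le> k \<Longrightarrow> psi a g G l h x j (z j) \<le> psi a g G l h x j v"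
    and u_sub: "\<And>i. 1 \<le> i \<Longrightarrow> i \<le> k \<Longrightarrow> u i - G (x i) \<in> subdiff l (x i)"
begin

text \<open>\<open>L\<close> is \<open>l\<close> with the junk value \<open>0\<close> outside \<open>dom l\<close>; it is only evaluated at points
  shown to lie in \<open>dom l\<close>.\<close>

definition L :: "'a \<Rightarrow> real" where
  "L v = real_of_ereal (l v)"

definition \<Phi> :: "nat \<Rightarrow> 'a \<Rightarrow> real" where
  "\<Phi> j v = (\<Sum>i=1..j. a i * (g (x i) + G (x i) \<bullet> (v - x i) + L v))"

definition gap :: "nat \<Rightarrow> real" where
  "gap j = A j * (g (x j) + L (x j)) - (\<Phi> j (z j) + h (z j))"

definition gap_increment_bound :: "nat \<Rightarrow> real" where
  "gap_increment_bound i = A i * (u i \<bullet> (x i - (a i / A i) *\<^sub>R z i - (A (i - 1) / A i) *\<^sub>R x (i - 1)))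
     - \<gamma> / q * N (z i - z (i - 1)) powr q"

lemma A_0: "A 0 = 0" and A_Suc: "A (Suc j) = A j + a (Suc j)"
  by (simp_all add: A_def)

lemma A_pos: "1 \<le> j \<Longrightarrow> 0 < A j"
  unfolding A_def using a_pos by (intro sum_pos) auto

lemma A_nonneg: "0 \<le> A j"
  using A_pos[of j] A_0 by (cases j) auto

lemma l_eq_ereal_L: "l v \<noteq> \<infinity> \<Longrightarrow> l v = ereal (L v)"
  using l_proper unfolding proper_fun_def L_def by (cases "l v") auto

lemma l_x_finite: "i \<le> k \<Longrightarrow> l (x i) = ereal (L (x i))"
proof (cases "i = 0")
  case True
  then show ?thesis using x0 unfolding edom_def by (intro l_eq_ereal_L) auto
next
  case False
  moreover assume "i \<le> k"
  ultimately have "u i - G (x i) \<in> subdiff l (x i)" using u_sub by simp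
  then show ?thesis unfolding subdiff_def by (intro l_eq_ereal_L) auto
qed

lemma psi_eq:
  assumes "l v = ereal (L v)"
  shows "psi a g G l h x j v = ereal (\<Phi> j v + h v)"
proof -
  have "psi a g G l h x j v
      = (\<Sum>i=1..j. ereal (a i * (g (x i) + G (x i) \<bullet> (v - x i) + L v))) + ereal (h v)"
    unfolding psi_def fhat_def assms by (intro arg_cong2[where f = "(+)"] sum.cong) auto
  then show ?thesis unfolding \<Phi>_def by simp
qed

lemma psi_infinite:
  assumes "1 \<le> j" "l v = \<infinity>"
  shows "psi a g G l h x j v = \<infinity>"
proof -
  have "(\<Sum>i=1..j. ereal (a i) * fhat g G l v (x i)) = \<infinity>"
    unfolding sum_Pinfty fhat_def using assms a_pos[of 1] by (intro conjI bexI[of _ 1]) auto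
  then show ?thesis unfolding psi_def by simp
qed

lemma l_z_finite:
  assumes "j \<le> k"
  shows "l (z j) = ereal (L (z j))"
proof (cases "j = 0")
  case True
  then show ?thesis using l_x_finite[of 0] z0 by simp
next
  case False
  then have "psi a g G l h x j (z j) \<le> psi a g G l h x j (x j)"
    using z_min assms by simp
  also have "\<dots> < \<infinity>" using psi_eq[OF l_x_finite[OF assms]] by simp
  finally show ?thesis using psi_infinite[of j "z j"] False by (intro l_eq_ereal_L) auto
qed

lemma z_minimal:
  assumes "j \<le> k" "l v = ereal (L v)"
  shows "\<Phi> j (z j) + h (z j) \<le> \<Phi> j v + h v"
proof (cases "j = 0")
  case True
  then show ?thesis using z0 h_zero[of "x 0"] h_nonneg[of v] unfolding \<Phi>_def by simp
next
  case False
  then have "psi a g G l h x j (z j) \<le> psi a g G l h x j v" using z_min assms by simp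
  then show ?thesis using psi_eq[OF assms(2)] psi_eq[OF l_z_finite[OF assms(1)]] by simp
qed

lemma l_finite_convex_on_segment:
  assumes v: "l v = ereal (L v)" and w: "l w = ereal (L w)" and t: "0 \<le> t" "t \<le> 1"
  defines "p \<equiv> v + t *\<^sub>R (w - v)"
  shows "l p = ereal (L p)" and "L p \<le> (1 - t) * L v + t * L w"
proof -
  have "p = (1 - t) *\<^sub>R v + t *\<^sub>R w" unfolding p_def by (simp add: algebra_simps)
  then have "l p \<le> ereal (1 - t) * l v + ereal t * l w"
    using l_convex t unfolding convex_ext_def by blast
  also have "\<dots> = ereal ((1 - t) * L v + t * L w)" using v w by simp
  finally have "l p \<le> ereal ((1 - t) * L v + t * L w)" .
  moreover from this show p: "l p = ereal (L p)" by (intro l_eq_ereal_L) auto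
  ultimately show "L p \<le> (1 - t) * L v + t * L w" by simp
qed

lemma \<Phi>_segment_convex:
  assumes v: "l v = ereal (L v)" and w: "l w = ereal (L w)" and t: "0 \<le> t" "t \<le> 1"
  shows "\<Phi> j (v + t *\<^sub>R (w - v)) \<le> (1 - t) * \<Phi> j v + t * \<Phi> j w"
proof -
  let ?p = "v + t *\<^sub>R (w - v)"
  let ?m = "\<lambda>i y. a i * (g (x i) + G (x i) \<bullet> (y - x i) + L y)"
  have "?m i ?p \<le> (1 - t) * ?m i v + t * ?m i w" if "1 \<le> i" for i
  proof -
    have "G (x i) \<bullet> (?p - x i) = (1 - t) * (G (x i) \<bullet> (v - x i)) + t * (G (x i) \<bullet> (w - x i))"
      by (simp add: inner_diff_right inner_add_right algebra_simps)
    then have "g (x i) + G (x i) \<bullet> (?p - x i) + L ?p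
        \<le> (1 - t) * (g (x i) + G (x i) \<bullet> (v - x i) + L v) + t * (g (x i) + G (x i) \<bullet> (w - x i) + L w)"
      using l_finite_convex_on_segment(2)[OF v w t] by (simp add: algebra_simps)
    then have "a i * (g (x i) + G (x i) \<bullet> (?p - x i) + L ?p)
        \<le> a i * ((1 - t) * (g (x i) + G (x i) \<bullet> (v - x i) + L v) + t * (g (x i) + G (x i) \<bullet> (w - x i) + L w))"
      using a_pos[OF that] by (intro mult_left_mono) auto
    then show ?thesis by (simp add: algebra_simps)
  qed
  then have "\<Phi> j ?p \<le> (\<Sum>i=1..j. (1 - t) * ?m i v + t * ?m i w)"
    unfolding \<Phi>_def by (intro sum_mono) auto
  also have "\<dots> = (1 - t) * \<Phi> j v + t * \<Phi> j w"
    unfolding \<Phi>_def by (simp add: sum.distrib sum_distrib_left)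
  finally show ?thesis .
qed

lemma minimizer_growth:
  assumes "Suc j \<le> k"
  shows "\<Phi> j (z j) + h (z j) + \<gamma> / q * N (z (Suc j) - z j) powr q \<le> \<Phi> j (z (Suc j)) + h (z (Suc j))"
proof (rule minimizer_growth_on_segment[OF norm q_pos \<gamma>_nonneg h_convex h_uc])
  fix t :: real assume t: "0 < t" "t < 1"
  have zj: "l (z j) = ereal (L (z j))" and zSj: "l (z (Suc j)) = ereal (L (z (Suc j)))"
    using l_z_finite assms by simp_all
  show "\<Phi> j (z j) + h (z j) \<le> \<Phi> j (z j + t *\<^sub>R (z (Suc j) - z j)) + h (z j + t *\<^sub>R (z (Suc j) - z j))"
    using assms t by (intro z_minimal l_finite_convex_on_segment(1)[OF zj zSj]) auto
  show "\<Phi> j (z j + t *\<^sub>R (z (Suc j) - z j)) \<le> (1 - t) * \<Phi> j (z j) + t * \<Phi> j (z (Suc j))"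
    using t by (intro \<Phi>_segment_convex[OF zj zSj]) auto
qed

lemma model_subgradient_inequality:
  assumes "1 \<le> m" "m \<le> k" "l v = ereal (L v)"
  shows "g (x m) + L (x m) + u m \<bullet> (v - x m) \<le> g (x m) + G (x m) \<bullet> (v - x m) + L v"
proof -
  have "l (x m) + ereal ((u m - G (x m)) \<bullet> (v - x m)) \<le> l v"
    using u_sub[OF assms(1,2)] unfolding subdiff_def by blast
  then show ?thesis using l_x_finite[OF assms(2)] assms(3) by (simp add: inner_diff_left)
qed

lemma objective_subgradient_inequality:
  assumes "1 \<le> m" "m \<le> k" "l v = ereal (L v)"
  shows "g (x m) + L (x m) + u m \<bullet> (v - x m) \<le> g v + L v"
  using model_subgradient_inequality[OF assms] convex_on_gradient_inequality[OF g_convex g_grad, of "x m" v]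
  by linarith

lemma gap_step:
  assumes "Suc j \<le> k"
  shows "gap (Suc j) - gap j \<le> gap_increment_bound (Suc j)"
proof -
  let ?m = "Suc j"
  have model: "a ?m * (g (x ?m) + L (x ?m) + u ?m \<bullet> (z ?m - x ?m))
      \<le> a ?m * (g (x ?m) + G (x ?m) \<bullet> (z ?m - x ?m) + L (z ?m))"
    using assms a_pos[of ?m] by (intro mult_left_mono model_subgradient_inequality l_z_finite) auto
  have objective: "A j * (g (x ?m) + L (x ?m) + u ?m \<bullet> (x j - x ?m)) \<le> A j * (g (x j) + L (x j))"
    using assms A_nonneg by (intro mult_left_mono objective_subgradient_inequality l_x_finite) auto
  have "gap_increment_bound ?m
      = A ?m * (u ?m \<bullet> x ?m) - a ?m * (u ?m \<bullet> z ?m) - A j * (u ?m \<bullet> x j)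
        - \<gamma> / q * N (z ?m - z j) powr q"
    using A_pos[of ?m] unfolding gap_increment_bound_def by (simp add: inner_diff_right algebra_simps)
  then show ?thesis
    using minimizer_growth[OF assms] model objective
    unfolding gap_def \<Phi>_def A_Suc by (simp add: algebra_simps inner_diff_right)
qed

lemma gap_le_sum_bounds: "j \<le> k \<Longrightarrow> gap j \<le> (\<Sum>i=1..j. gap_increment_bound i)"
proof (induction j)
  case 0
  then show ?case using z0 h_zero[of "x 0"] unfolding gap_def \<Phi>_def A_0 by simp
next
  case (Suc j)
  then show ?case using gap_step[of j] by simp
qed

lemma gap_estimate:
  "ereal (A k) * (ereal (g (x k)) + l (x k)) - psi a g G l h x k (z k)
     \<le> ereal (\<Sum>i=1..k. gap_increment_bound i)"
proof -
  have "ereal (A k) * (ereal (g (x k)) + l (x k)) - psi a g G l h x k (z k) = ereal (gap k)"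
    unfolding gap_def using l_x_finite[of k] psi_eq[OF l_z_finite[of k]] by simp
  then show ?thesis using gap_le_sum_bounds[of k] by simp
qed

end

theorem mainTheorem7:
  fixes N :: "'a::euclidean_space \<Rightarrow> real"
    and g :: "'a \<Rightarrow> real" and G :: "'a \<Rightarrow> 'a" and l :: "'a \<Rightarrow> ereal"
    and h :: "'a \<Rightarrow> real" and q \<gamma> :: real
    and a :: "nat \<Rightarrow> real" and A :: "nat \<Rightarrow> real"
    and x z u :: "nat \<Rightarrow> 'a" and k :: nat
  assumes N: "is_norm N"
    and g_convex: "convex_on UNIV g"
    and g_grad: "\<And>y. (g has_derivative (\<lambda>v. G y \<bullet> v)) (at y)"
    and l_proper: "proper_fun l" and l_convex: "convex_ext l" and l_closed: "closed_fun l"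
    and q: "q \<ge> 2" and \<gamma>: "\<gamma> > 0"
    and x0: "x 0 \<in> edom l"
    and h_convex: "convex_on UNIV h"
    and h_nonneg: "\<And>v. h v \<ge> 0"
    and h_zero: "\<And>v. h v = 0 \<longleftrightarrow> v = x 0"
    and h_uc: "unif_convex q \<gamma> N (\<lambda>v. ereal (h v))"
    and a_pos: "\<And>i. i \<ge> 1 \<Longrightarrow> a i > 0"
    and A_def: "\<And>j. A j = (\<Sum>i=1..j. a i)"
    and z0: "z 0 = x 0"
    and z_min: "\<And>j v. 1 \<le> j \<Longrightarrow> j \<le> k \<Longrightarrow> psi a g G l h x j (z j) \<le> psi a g G l h x j v"
    and x_dom: "\<And>i. 1 \<le> i \<Longrightarrow> i \<le> k \<Longrightarrow> subdiff l (x i) \<noteq> {}"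
    and u_sub: "\<And>i. 1 \<le> i \<Longrightarrow> i \<le> k \<Longrightarrow> u i - G (x i) \<in> subdiff l (x i)"
    and k: "k \<ge> 1"
  shows "ereal (A k) * (ereal (g (x k)) + l (x k)) - psi a g G l h x k (z k)
     \<le> ereal (\<Sum>i=1..k. A i * (u i \<bullet> (x i - (a i / A i) *\<^sub>R z i - (A (i - 1) / A i) *\<^sub>R x (i - 1)))
                          - \<gamma> / q * N (z i - z (i - 1)) powr q)"
proof -
  interpret estimate_sequence N g G l h q \<gamma> a A x z u k
    using assms by unfold_locales auto
  show ?thesis using gap_estimate unfolding gap_increment_bound_def .
qed

end
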